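(* Let $\Sigma$ be the set of linear functionals $\mu:\mathbb{C}[X]\to\mathbb{C}$ with $\mu(1)=1$, and $\Sigma_1^{\times}=\{\mu\in\Sigma:\mu(X)=1\}$. Then the map $$\operatorname{LOG}:=R^{-1}\circ\Big(z\tfrac{d}{dz}\log\Big)\circ S:\ (\Sigma_1^{\times},\boxtimes)\longrightarrow(\Sigma,\boxplus)$$ is a well-defined isomorphism of abelian groups (with inverse denoted $\operatorname{EXP}$).
   Context: For $\mu\in\Sigma$ write $m_n(\mu)=\mu(X^n)$. The Cauchy transform is $G_\mu(z)=\sum_{n\ge0}m_n(\mu)z^{-(n+1)}$; its compositional inverse has the form $G_\mu^{-1}(z)=\frac1z+\sum_{n\ge0}\alpha_nz^n$, and the $R$-transform is $R_\mu(z):=zG_\mu^{-1}(z)-1=\sum_{n\ge1}\alpha_{n-1}z^n\in z\mathbb{C}[[z]]$ (its coefficients are the free cumulants of $\mu$). For $\mu$ with $\mu(X)\ne0$ the moment series is $M_\mu(z)=\sum_{n\ge1}m_n(\mu)z^n$ and the $S$-transform is $S_\mu(z)=\frac{1+z}{z}M_\mu^{-1}(z)$, where $M_\mu^{-1}$ is the compositional inverse. $\boxplus$ and $\boxtimes$ denote Voiculescu's additive and multiplicative free convolution of distributions (the distributions of $a+b$, resp. $ab$, for free random variables $a,b$ with distributions $\mu,\nu$). Known (Voiculescu): $R:(\Sigma,\boxplus)\to(z\mathbb{C}[[z]],+)$ and $S:(\Sigma_1^{\times},\boxtimes)\to(1+z\mathbb{C}[[z]],\cdot)$ are group isomorphisms.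 The map $z\frac{d}{dz}\log$ sends $f\in 1+z\mathbb{C}[[z]]$ to $z f'(z)/f(z)\in z\mathbb{C}[[z]]$. *)

theory Defs
  imports "HOL-Computational_Algebra.Polynomial" "HOL-Computational_Algebra.Formal_Power_Series"
begin

definition Dist :: "(complex poly \<Rightarrow> complex) set" where
  "Dist = {\<mu>. (\<forall>p q. \<mu> (p + q) = \<mu> p + \<mu> q) \<and> (\<forall>c p. \<mu> (smult c p) = c * \<mu> p) \<and> \<mu> 1 = 1}"

definition Dist1x :: "(complex poly \<Rightarrow> complex) set" where
  "Dist1x = {\<mu> \<in> Dist. \<mu> [:0, 1:] = 1}"

definition mom :: "(complex poly \<Rightarrow> complex) \<Rightarrow> nat \<Rightarrow> complex" where
  "mom \<mu> n = \<mu> (monom 1 n)"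

definition functional_of_moments :: "(nat \<Rightarrow> complex) \<Rightarrow> complex poly \<Rightarrow> complex" where
  "functional_of_moments m p = (\<Sum>i\<le>degree p. coeff p i * m i)"

text \<open>A word is a list of blocks (b,k) meaning a^k if b, and b^k (second variable) otherwise.
  merge_blocks removes empty blocks and merges adjacent blocks of the same variable,
  producing an alternating word.\<close>
fun merge_blocks :: "(bool \<times> nat) list \<Rightarrow> (bool \<times> nat) list" where
  "merge_blocks [] = []"
| "merge_blocks ((b, k) # w) =
     (if k = 0 then merge_blocks w
      else (case merge_blocks w of
              [] \<Rightarrow> [(b, k)]
            | (c, l) # w' \<Rightarrow> (if c = b then (b, k + l) # w' else (b, k) # (c, l) # w')))"

definition block_mom :: "(nat \<Rightarrow> complex) \<Rightarrow> (nat \<Rightarrow> complex) \<Rightarrow> bool \<times> nat \<Rightarrow> complex" where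
  "block_mom m1 m2 bk = (if fst bk then m1 (snd bk) else m2 (snd bk))"

text \<open>Freeness: phi((a_1 - phi a_1)...(a_n - phi a_n)) = 0 for alternating a_i, n >= 1.
  Expanding gives the recursion below (on the number of alternating blocks);
  the first argument is fuel, which is always sufficient when started at the word length.\<close>
primrec free_state_aux :: "nat \<Rightarrow> (nat \<Rightarrow> complex) \<Rightarrow> (nat \<Rightarrow> complex) \<Rightarrow> (bool \<times> nat) list \<Rightarrow> complex" where
  "free_state_aux 0 m1 m2 w = 1"
| "free_state_aux (Suc f) m1 m2 w =
     (let v = merge_blocks w; n = length v in
      if n = 0 then 1
      else - (\<Sum>S \<in> Pow {..<n} - {{..<n}}.
                (\<Prod>i \<in> {..<n} - S. - block_mom m1 m2 (v ! i)) * free_state_aux f m1 m2 (nths v S)))"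

definition free_state :: "(nat \<Rightarrow> complex) \<Rightarrow> (nat \<Rightarrow> complex) \<Rightarrow> (bool \<times> nat) list \<Rightarrow> complex" where
  "free_state m1 m2 w = free_state_aux (length w) m1 m2 w"

text \<open>Additive free convolution: distribution of a+b, a,b free with distributions mu, nu.\<close>
definition free_add_conv :: "(complex poly \<Rightarrow> complex) \<Rightarrow> (complex poly \<Rightarrow> complex) \<Rightarrow> complex poly \<Rightarrow> complex" where
  "free_add_conv \<mu> \<nu> = functional_of_moments
     (\<lambda>n. \<Sum>w \<in> {w :: bool list. length w = n}. free_state (mom \<mu>) (mom \<nu>) (map (\<lambda>b. (b, 1)) w))"

definition free_mult_conv :: "(complex poly \<Rightarrow> complex) \<Rightarrow> (complex poly \<Rightarrow> complex) \<Rightarrow> complex poly \<Rightarrow> complex" where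
  "free_mult_conv \<mu> \<nu> = functional_of_moments
     (\<lambda>n. free_state (mom \<mu>) (mom \<nu>) (concat (replicate n [(True, 1), (False, 1)])))"

text \<open>With w = 1/z, G(z) = H(w) where H(w) = sum m_n w^(n+1). Hence G^{-1}(z) = 1/H^{-1}(z),
  and writing H^{-1}(z) = z U(z), we get R(z) = z G^{-1}(z) - 1 = 1/U(z) - 1.\<close>
definition R_transform :: "(complex poly \<Rightarrow> complex) \<Rightarrow> complex fps" where
  "R_transform \<mu> = inverse (fps_shift 1 (fps_inv (fps_X * Abs_fps (mom \<mu>)))) - 1"

definition moment_series :: "(complex poly \<Rightarrow> complex) \<Rightarrow> complex fps" where
  "moment_series \<mu> = Abs_fps (\<lambda>n. if n = 0 then 0 else mom \<mu> n)"

definition S_transform :: "(complex poly \<Rightarrow> complex) \<Rightarrow> complex fps" where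
  "S_transform \<mu> = (1 + fps_X) * fps_shift 1 (fps_inv (moment_series \<mu>))"

definition zdlog :: "complex fps \<Rightarrow> complex fps" where
  "zdlog f = fps_X * fps_deriv f * inverse f"

definition LOG :: "(complex poly \<Rightarrow> complex) \<Rightarrow> complex poly \<Rightarrow> complex" where
  "LOG \<mu> = the_inv_into Dist R_transform (zdlog (S_transform \<mu>))"

end

theory Submission
  imports Defs
begin

text \<open>The maps \<open>R : \<Sigma> \<rightarrow> z\<complex>[[z]]\<close>, \<open>S : \<Sigma>\<^sub>1\<^sup>\<times> \<rightarrow> 1 + z\<complex>[[z]]\<close> and
  \<open>z d/dz log : 1 + z\<complex>[[z]] \<rightarrow> z\<complex>[[z]]\<close> are bijections, so \<open>LOG\<close> is one; it is a homomorphism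
  because \<open>z d/dz log\<close> turns products into sums, \<open>S\<close> turns multiplicative free convolution into
  products and \<open>R\<close> turns additive free convolution into sums.
  The last two facts are proved in an operator model on the full Fock space over two letters:
  the operator \<open>\<ell> + \<Sum> \<kappa>_{j+1} (\<ell>\<^sup>*)^j\<close> of a letter has the moments of the distribution with
  free cumulants \<open>\<kappa>\<close>, operators on different letters are free (centred vectors are
  supported on words beginning with their own letter), and the moments of the sum and of the
  product are read off from generating functions; for the product these are built from the
  subordination functions \<open>\<omega> = M_\<mu>\<^sup>-\<^sup>1 \<circ> M_\<rho>\<close>.\<close>

unbundle fps_syntax

lemma mom_functional_of_moments [simp]: "mom (functional_of_moments m) n = m n"
proof -
  have "(\<Sum>i\<le>n. coeff (monom (1::complex) n) i * m i) = m n"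
    by (subst sum.remove[of _ n]) (auto simp: coeff_monom)
  then show ?thesis by (simp add: mom_def functional_of_moments_def degree_monom_eq)
qed

lemma functional_of_moments_in_Dist:
  assumes "m 0 = 1"
  shows "functional_of_moments m \<in> Dist"
proof -
  have add: "functional_of_moments m (p + q) = functional_of_moments m p + functional_of_moments m q"
    for p q :: "complex poly"
  proof -
    let ?D = "max (degree p) (max (degree q) (degree (p + q)))"
    have sum_up_to_D: "functional_of_moments m r = (\<Sum>i\<le>?D. coeff r i * m i)" if "degree r \<le> ?D" for r
      unfolding functional_of_moments_def
      by (rule sum.mono_neutral_left) (use that in \<open>auto simp: coeff_eq_0\<close>)
    show ?thesis
      by (subst (1 2 3) sum_up_to_D) (auto simp: sum.distrib distrib_right)
  qed
  have smult: "functional_of_moments m (smult c p) = c * functional_of_moments m p" for c p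
    by (cases "c = 0")
      (simp_all add: functional_of_moments_def sum_distrib_left mult.assoc)
  show ?thesis
    using add smult assms by (auto simp: Dist_def functional_of_moments_def)
qed

lemma Dist_functional_of_moments:
  assumes "\<mu> \<in> Dist"
  shows "functional_of_moments (mom \<mu>) = \<mu>"
proof
  fix p :: "complex poly"
  have add: "\<mu> (p + q) = \<mu> p + \<mu> q" and smult: "\<mu> (smult c p) = c * \<mu> p" for p q c
    using assms by (auto simp: Dist_def)
  have sum: "\<mu> (\<Sum>i\<in>A. f i) = (\<Sum>i\<in>A. \<mu> (f i))" if "finite A" for A and f :: "nat \<Rightarrow> complex poly"
    using that by (induction A rule: finite_induct) (auto simp: add smult[of 0 0, simplified])
  have "\<mu> p = \<mu> (\<Sum>i\<le>degree p. monom (coeff p i) i)"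
    by (simp only: poly_as_sum_of_monoms)
  also have "\<dots> = (\<Sum>i\<le>degree p. coeff p i * mom \<mu> i)"
    by (simp add: sum mom_def smult[symmetric] smult_monom)
  finally show "functional_of_moments (mom \<mu>) p = \<mu> p"
    by (simp add: functional_of_moments_def)
qed

lemma Dist_mom_0: "\<mu> \<in> Dist \<Longrightarrow> mom \<mu> 0 = 1"
  by (simp add: Dist_def mom_def)

lemma Dist_eqI: "\<mu> \<in> Dist \<Longrightarrow> \<nu> \<in> Dist \<Longrightarrow> (\<And>n. mom \<mu> n = mom \<nu> n) \<Longrightarrow> \<mu> = \<nu>"
  by (metis Dist_functional_of_moments ext)

lemma Dist1x_subset_Dist: "Dist1x \<subseteq> Dist"
  by (auto simp: Dist1x_def)

lemma Dist1x_iff: "\<mu> \<in> Dist1x \<longleftrightarrow> \<mu> \<in> Dist \<and> mom \<mu> (Suc 0) = 1"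
proof -
  have "monom (1::complex) (Suc 0) = [:0, 1:]"
    by (simp add: monom_Suc)
  then show ?thesis
    by (simp add: Dist1x_def mom_def)
qed


text \<open>Indices \<open>1 :: nat\<close> are written \<open>Suc 0\<close>, the form in which \<open>simp\<close> leaves them.\<close>
lemma fps_X_mult_fps_shift_1:
  "f $ 0 = 0 \<Longrightarrow> fps_X * fps_shift (Suc 0) f = (f :: 'a::comm_ring_1 fps)"
  by (intro fps_ext) auto

lemma fps_shift_1_fps_X_mult [simp]:
  "fps_shift (Suc 0) (fps_X * f) = (f :: 'a::comm_ring_1 fps)"
  by (intro fps_ext) simp

lemma Abs_fps_nth_Suc: "Abs_fps (\<lambda>j. f $ Suc j) = fps_shift (Suc 0) f"
  by (intro fps_ext) simp

lemma fps_inv_nth_0 [simp]: "fps_inv a $ 0 = 0"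
  by (simp add: fps_inv_def)

lemma fps_inv_nth_1 [simp]: "fps_inv (a::'a::field fps) $ Suc 0 = 1 / a $ Suc 0"
  by (simp add: fps_inv_def)

lemma fps_compose_eq_mult_shift:
  fixes f g :: "'a::idom fps"
  assumes "f $ 0 = 0" and "g $ 0 = 0"
  shows "f oo g = g * (fps_shift 1 f oo g)"
proof -
  have "f oo g = (fps_X * fps_shift 1 f) oo g"
    using fps_X_mult_fps_shift_1[OF assms(1)] by simp
  then show ?thesis
    using assms(2) by (simp add: fps_compose_mult_distrib)
qed

lemma fps_mult_compose_nth:
  fixes a b h :: "'a::idom fps"
  assumes b0: "b $ 0 = 0" and "n < N"
  shows "(h * (a oo b)) $ n = (\<Sum>j<N. a $ j * (h * b ^ j) $ n)"
proof -
  define p where "p = (\<Sum>j<N. fps_const (a $ j) * fps_X ^ j)"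
  have p_nth: "p $ i = (if i < N then a $ i else 0)" for i
    by (simp add: p_def fps_sum_nth fps_X_power_nth if_distrib[where f="(*) _"] cong: if_cong)
  have "(a oo b) $ i = (p oo b) $ i" if "i \<le> n" for i
    using that \<open>n < N\<close> by (simp add: fps_compose_nth p_nth)
  then have "(h * (a oo b)) $ n = (h * (p oo b)) $ n"
    by (simp add: fps_mult_nth)
  also have "p oo b = (\<Sum>j<N. fps_const (a $ j) * b ^ j)"
    using b0 by (simp add: p_def fps_compose_sum_distrib fps_compose_mult_distrib fps_X_power_compose)
  also have "(h * \<dots>) $ n = (\<Sum>j<N. a $ j * (h * b ^ j) $ n)"
    unfolding sum_distrib_left fps_sum_nth
    by (simp only: mult.left_commute[of h] fps_mult_left_const_nth)
  finally show ?thesis .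
qed


section \<open>The R-transform\<close>

definition moment_gf :: "(complex poly \<Rightarrow> complex) \<Rightarrow> complex fps" where
  "moment_gf \<mu> = Abs_fps (mom \<mu>)"

text \<open>The series \<open>H(w) = G(1/w)\<close> of the definition of \<open>R_transform\<close>.\<close>
definition cauchy_series :: "(complex poly \<Rightarrow> complex) \<Rightarrow> complex fps" where
  "cauchy_series \<mu> = fps_X * moment_gf \<mu>"

lemma moment_gf_nth [simp]: "moment_gf \<mu> $ n = mom \<mu> n"
  by (simp add: moment_gf_def)

lemma cauchy_series_nth_0 [simp]: "cauchy_series \<mu> $ 0 = 0"
  by (simp add: cauchy_series_def)

lemma cauchy_series_nth_1 [simp]: "\<mu> \<in> Dist \<Longrightarrow> cauchy_series \<mu> $ Suc 0 = 1"
  by (simp add: cauchy_series_def Dist_mom_0)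

lemma moment_gf_eq_1_plus_moment_series: "\<mu> \<in> Dist \<Longrightarrow> moment_gf \<mu> = 1 + moment_series \<mu>"
  by (intro fps_ext) (simp add: moment_series_def Dist_mom_0)

lemma R_transform_nth_0 [simp]:
  assumes "\<mu> \<in> Dist"
  shows "R_transform \<mu> $ 0 = 0"
  using assms by (simp add: R_transform_def Dist_mom_0)

lemma R_transform_compose_cauchy_series:
  assumes "\<mu> \<in> Dist"
  shows "R_transform \<mu> oo cauchy_series \<mu> = moment_gf \<mu> - 1"
proof -
  define U where "U = fps_shift 1 (fps_inv (cauchy_series \<mu>))"
  have inv: "fps_inv (cauchy_series \<mu>) oo cauchy_series \<mu> = fps_X"
    using assms by (intro fps_inv) simp_all
  have U0: "U $ 0 = 1"
    using assms by (simp add: U_def)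
  have "fps_inv (cauchy_series \<mu>) = fps_X * U"
    by (simp add: U_def fps_X_mult_fps_shift_1)
  with inv have "fps_X = cauchy_series \<mu> * (U oo cauchy_series \<mu>)"
    by (simp add: fps_compose_mult_distrib)
  then have "fps_X * 1 = fps_X * (moment_gf \<mu> * (U oo cauchy_series \<mu>))"
    by (simp add: cauchy_series_def mult.assoc)
  then have "moment_gf \<mu> * (U oo cauchy_series \<mu>) = 1"
    by (simp only: mult_cancel_left fps_X_neq_zero simp_thms)
  then have "inverse (U oo cauchy_series \<mu>) = moment_gf \<mu>"
    by (metis fps_inverse_unique mult.commute)
  moreover have "R_transform \<mu> = inverse U - 1"
    by (simp add: R_transform_def U_def cauchy_series_def moment_gf_def)
  ultimately show ?thesis
    using U0 by (simp add: fps_compose_sub_distrib fps_inverse_compose)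
qed

lemma inj_on_R_transform: "inj_on R_transform Dist"
proof (rule inj_onI)
  fix \<mu> \<nu> assume \<mu>: "\<mu> \<in> Dist" and \<nu>: "\<nu> \<in> Dist" and eq: "R_transform \<mu> = R_transform \<nu>"
  define U where "U \<rho> = fps_shift 1 (fps_inv (cauchy_series \<rho>))" for \<rho>
  have U0: "U \<mu> $ 0 \<noteq> 0" "U \<nu> $ 0 \<noteq> 0"
    using \<mu> \<nu> by (simp_all add: U_def)
  have "inverse (U \<mu>) = inverse (U \<nu>)"
    using eq by (simp add: R_transform_def U_def cauchy_series_def moment_gf_def)
  then have "inverse (inverse (U \<mu>)) = inverse (inverse (U \<nu>))"
    by simp
  then have "U \<mu> = U \<nu>"
    using U0 by simp
  then have "fps_X * U \<mu> = fps_X * U \<nu>"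
    by simp
  then have "fps_inv (cauchy_series \<mu>) = fps_inv (cauchy_series \<nu>)"
    by (simp add: U_def fps_X_mult_fps_shift_1)
  then have "fps_inv (fps_inv (cauchy_series \<mu>)) = fps_inv (fps_inv (cauchy_series \<nu>))"
    by simp
  then have "cauchy_series \<mu> = cauchy_series \<nu>"
    using \<mu> \<nu> by (simp add: fps_inv_idempotent)
  then have "moment_gf \<mu> = moment_gf \<nu>"
    by (simp add: cauchy_series_def)
  then have "mom \<mu> n = mom \<nu> n" for n
    by (metis moment_gf_nth)
  then show "\<mu> = \<nu>"
    using \<mu> \<nu> by (intro Dist_eqI)
qed

lemma R_transform_image: "R_transform ` Dist = {f. f $ 0 = 0}"
proof (intro equalityI subsetI)
  fix f assume "f \<in> R_transform ` Dist"
  then show "f \<in> {f. f $ 0 = 0}" by auto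
next
  fix f :: "complex fps" assume "f \<in> {f. f $ 0 = 0}"
  then have f0: "f $ 0 = 0" by simp
  define J where "J = fps_X * inverse (1 + f)"
  have J0: "J $ 0 = 0" and J1: "J $ Suc 0 = 1"
    by (simp_all add: J_def f0)
  define H where "H = fps_inv J"
  define \<mu> where "\<mu> = functional_of_moments (\<lambda>n. H $ Suc n)"
  have \<mu>: "\<mu> \<in> Dist"
    unfolding \<mu>_def by (rule functional_of_moments_in_Dist) (simp add: H_def J1)
  have "fps_X * Abs_fps (mom \<mu>) = H"
    by (intro fps_ext) (simp add: \<mu>_def H_def)
  moreover have "fps_inv H = J"
    unfolding H_def by (rule fps_inv_idempotent) (simp_all add: J0 J1)
  ultimately have "R_transform \<mu> = f"
    by (simp add: R_transform_def J_def f0)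
  then show "f \<in> R_transform ` Dist"
    using \<mu> by blast
qed


section \<open>The logarithmic derivative \<open>z d/dz log\<close>\<close>

lemma zdlog_nth_0 [simp]: "zdlog f $ 0 = 0"
  by (simp add: zdlog_def mult.assoc)

lemma zdlog_mult:
  assumes "f $ 0 \<noteq> 0" "g $ 0 \<noteq> 0"
  shows "zdlog (f * g) = zdlog f + zdlog g"
proof -
  have "zdlog (f * g) = fps_X * (fps_deriv f * g + f * fps_deriv g) * (inverse f * inverse g)"
    by (simp add: zdlog_def fps_inverse_mult)
  also have "\<dots> = fps_X * fps_deriv f * inverse f * (g * inverse g)
                  + fps_X * fps_deriv g * inverse g * (f * inverse f)"
    by (simp add: algebra_simps)
  finally show ?thesis
    using assms by (simp add: zdlog_def inverse_mult_eq_1')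
qed

lemma zdlog_eq_0_imp_const:
  assumes "f $ 0 \<noteq> 0" and "zdlog f = 0"
  shows "f = fps_const (f $ 0)"
proof -
  have "fps_deriv f * inverse f = 0"
    using assms(2) by (simp add: zdlog_def mult.assoc)
  then have "fps_deriv f = 0"
    using assms(1) by simp
  then show ?thesis
    by simp
qed

lemma zdlog_inj:
  assumes f0: "f $ 0 = 1" and g0: "g $ 0 = 1" and eq: "zdlog f = zdlog g"
  shows "f = g"
proof -
  have "zdlog f = zdlog (f * inverse g) + zdlog g"
    using zdlog_mult[of "f * inverse g" g] f0 g0 by (simp add: mult.assoc inverse_mult_eq_1)
  then have "zdlog (f * inverse g) = 0"
    using eq by simp
  then have "f * inverse g = 1"
    using zdlog_eq_0_imp_const[of "f * inverse g"] f0 g0 by simp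
  have "f = f * (inverse g * g)"
    using g0 by (simp add: inverse_mult_eq_1)
  also have "\<dots> = (f * inverse g) * g"
    by (simp only: mult.assoc)
  finally show ?thesis
    using \<open>f * inverse g = 1\<close> by simp
qed

text \<open>The solution of \<open>z f'/f = h\<close> is \<open>exp (\<integral> h/z)\<close>.\<close>
lemma zdlog_surj:
  assumes h0: "h $ 0 = 0"
  shows "\<exists>f. f $ 0 = 1 \<and> zdlog f = h"
proof -
  define p where "p = fps_integral0 (fps_shift 1 h)"
  define f where "f = fps_exp 1 oo p"
  have p0: "p $ 0 = 0" by (simp add: p_def)
  have f0: "f $ 0 = 1" by (simp add: f_def)
  have "fps_deriv f = (fps_deriv (fps_exp 1) oo p) * fps_deriv p"
    unfolding f_def by (rule fps_compose_deriv[OF p0])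
  then have "fps_deriv f = f * fps_shift 1 h"
    by (simp add: f_def p_def fps_deriv_fps_integral)
  then have "zdlog f = fps_X * fps_shift 1 h * (f * inverse f)"
    by (simp add: zdlog_def algebra_simps)
  then have "zdlog f = h"
    using f0 h0 by (simp add: inverse_mult_eq_1' fps_X_mult_fps_shift_1)
  then show ?thesis
    using f0 by blast
qed


section \<open>The S-transform\<close>

lemma moment_series_nth: "moment_series \<mu> $ n = (if n = 0 then 0 else mom \<mu> n)"
  by (simp add: moment_series_def)

lemma moment_series_nth_0 [simp]: "moment_series \<mu> $ 0 = 0"
  by (simp add: moment_series_def)

lemma moment_series_nth_1 [simp]: "\<mu> \<in> Dist1x \<Longrightarrow> moment_series \<mu> $ Suc 0 = 1"
  by (simp add: moment_series_def Dist1x_iff)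

lemma one_plus_fps_X_neq_0: "(1 + fps_X :: 'a::comm_ring_1 fps) \<noteq> 0"
proof
  assume "(1 + fps_X :: 'a fps) = 0"
  then have "(1 + fps_X :: 'a fps) $ 0 = 0" by simp
  then show False by simp
qed

lemma fps_X_mult_S_transform:
  "fps_X * S_transform \<mu> = (1 + fps_X) * fps_inv (moment_series \<mu>)"
  unfolding S_transform_def
  by (simp add: mult.left_commute[of fps_X] fps_X_mult_fps_shift_1)

lemma S_transform_nth_0 [simp]: "\<mu> \<in> Dist1x \<Longrightarrow> S_transform \<mu> $ 0 = 1"
  by (simp add: S_transform_def)

lemma inj_on_S_transform: "inj_on S_transform Dist1x"
proof (rule inj_onI)
  fix \<mu> \<nu> assume \<mu>: "\<mu> \<in> Dist1x" and \<nu>: "\<nu> \<in> Dist1x" and eq: "S_transform \<mu> = S_transform \<nu>"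
  have "(1 + fps_X) * fps_inv (moment_series \<mu>) = (1 + fps_X) * fps_inv (moment_series \<nu>)"
    using eq fps_X_mult_S_transform by metis
  then have "fps_inv (moment_series \<mu>) = fps_inv (moment_series \<nu>)"
    using one_plus_fps_X_neq_0 mult_left_cancel by blast
  then have "fps_inv (fps_inv (moment_series \<mu>)) = fps_inv (fps_inv (moment_series \<nu>))"
    by simp
  then have "moment_series \<mu> = moment_series \<nu>"
    using \<mu> \<nu> by (simp add: fps_inv_idempotent)
  then have coeff_eq: "moment_series \<mu> $ n = moment_series \<nu> $ n" for n
    by simp
  have "mom \<mu> n = mom \<nu> n" for n
    using coeff_eq[of n] \<mu> \<nu> by (cases "n = 0") (simp_all add: Dist1x_iff Dist_mom_0 moment_series_nth)
  then show "\<mu> = \<nu>"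
    using \<mu> \<nu> Dist1x_subset_Dist by (intro Dist_eqI) auto
qed

lemma S_transform_image: "S_transform ` Dist1x = {s. s $ 0 = 1}"
proof (intro equalityI subsetI)
  fix s assume "s \<in> S_transform ` Dist1x"
  then show "s \<in> {s. s $ 0 = 1}" by auto
next
  fix s :: "complex fps" assume "s \<in> {s. s $ 0 = 1}"
  then have s0: "s $ 0 = 1" by simp
  define t where "t = fps_X * (s * inverse (1 + fps_X))"
  have t0: "t $ 0 = 0" and t1: "t $ Suc 0 = 1"
    by (simp_all add: t_def s0)
  define \<mu> where "\<mu> = functional_of_moments (\<lambda>n. if n = 0 then 1 else fps_inv t $ n)"
  have \<mu>: "\<mu> \<in> Dist1x"
    by (simp add: Dist1x_iff \<mu>_def functional_of_moments_in_Dist t1)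
  have "moment_series \<mu> = fps_inv t"
    by (intro fps_ext) (simp add: moment_series_def \<mu>_def)
  moreover have "fps_inv (fps_inv t) = t"
    by (rule fps_inv_idempotent) (simp_all add: t0 t1)
  ultimately have "S_transform \<mu> = (1 + fps_X) * (inverse (1 + fps_X) * s)"
    by (simp add: S_transform_def t_def mult.commute)
  also have "\<dots> = s"
    by (simp add: mult.assoc[symmetric] inverse_mult_eq_1')
  finally show "s \<in> S_transform ` Dist1x"
    using \<mu> by blast
qed


section \<open>The full Fock space over two letters\<close>

text \<open>Vectors are coefficient functions on words. \<open>fock_op N \<kappa> c\<close> is the operator
  \<open>\<ell>_c + \<Sum>_{j<N} \<kappa>(j+1) (\<ell>_c\<^sup>*)^j\<close>, with \<open>\<ell>_c\<close> the creation operator of the letter \<open>c\<close>;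
  untruncated, its vacuum distribution has free cumulants \<open>\<kappa>\<close>, and the truncation at \<open>N\<close>
  does not affect the first \<open>N\<close> moments.\<close>
type_synonym fock_vec = "bool list \<Rightarrow> complex"

definition vacuum :: fock_vec where
  "vacuum w = (if w = [] then 1 else 0)"

definition fock_op :: "nat \<Rightarrow> (nat \<Rightarrow> complex) \<Rightarrow> bool \<Rightarrow> fock_vec \<Rightarrow> fock_vec" where
  "fock_op N \<kappa> c v w = (case w of [] \<Rightarrow> 0 | d # w' \<Rightarrow> if d = c then v w' else 0)
                       + (\<Sum>j<N. \<kappa> (Suc j) * v (replicate j c @ w))"

definition linear_op :: "(fock_vec \<Rightarrow> fock_vec) \<Rightarrow> bool" where
  "linear_op T \<longleftrightarrow> (\<forall>a b u v. T (\<lambda>w. a * u w + b * v w) = (\<lambda>w. a * T u w + b * T v w))"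

lemma linear_op_fock_op: "linear_op (fock_op N \<kappa> c)"
  unfolding linear_op_def
  by (auto simp: fock_op_def fun_eq_iff sum.distrib sum_distrib_left algebra_simps split: list.splits)

lemma linear_op_funpow: "linear_op T \<Longrightarrow> linear_op (T ^^ n)"
  by (induction n) (simp_all add: linear_op_def)

lemma linear_op_zero: "linear_op T \<Longrightarrow> T (\<lambda>w. 0) = (\<lambda>w. 0)"
  unfolding linear_op_def by (erule allE[of _ 0], erule allE[of _ 0]) simp

lemma linear_op_scale: "linear_op T \<Longrightarrow> T (\<lambda>w. a * u w) = (\<lambda>w. a * T u w)"
  unfolding linear_op_def by (erule allE[of _ a], erule allE[of _ 0]) simp

lemma linear_op_add: "linear_op T \<Longrightarrow> T (\<lambda>w. u w + v w) = (\<lambda>w. T u w + T v w)"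
  unfolding linear_op_def by (erule allE[of _ 1], erule allE[of _ 1]) simp

lemma linear_op_sum:
  assumes "linear_op T" "finite A"
  shows "T (\<lambda>w. \<Sum>i\<in>A. f i w) = (\<lambda>w. \<Sum>i\<in>A. T (f i) w)"
  using assms(2)
proof (induction A rule: finite_induct)
  case empty
  then show ?case using linear_op_zero[OF assms(1)] by simp
next
  case (insert x F)
  then show ?case using linear_op_add[OF assms(1), of "f x" "\<lambda>w. \<Sum>i\<in>F. f i w"] by simp
qed

lemma linear_op_sum_scale:
  assumes "linear_op T" "finite A"
  shows "T (\<lambda>w. \<Sum>i\<in>A. a i * f i w) = (\<lambda>w. \<Sum>i\<in>A. a i * T (f i) w)"
  using linear_op_sum[OF assms, of "\<lambda>i w. a i * f i w"] linear_op_scale[OF assms(1)] by simp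

definition no_head :: "bool \<Rightarrow> bool list \<Rightarrow> bool" where
  "no_head c w \<longleftrightarrow> w = [] \<or> hd w \<noteq> c"

lemma no_head_Nil [simp]: "no_head c []"
  by (simp add: no_head_def)

definition letter_action :: "nat \<Rightarrow> (nat \<Rightarrow> complex) \<Rightarrow> (nat \<Rightarrow> complex) \<Rightarrow> nat \<Rightarrow> complex" where
  "letter_action N \<kappa> d j = (if j = 0 then 0 else d (j - 1)) + (\<Sum>i<N. \<kappa> (Suc i) * d (i + j))"

lemma fock_op_replicate:
  assumes "no_head c w"
  shows "fock_op N \<kappa> c v (replicate j c @ w) = letter_action N \<kappa> (\<lambda>i. v (replicate i c @ w)) j"
proof (cases j)
  case 0
  have "(case w of [] \<Rightarrow> 0 | d # w' \<Rightarrow> if d = c then v w' else 0) = 0"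
    using assms by (cases w) (auto simp: no_head_def)
  then show ?thesis
    using 0 by (simp add: fock_op_def letter_action_def)
next
  case (Suc j')
  have shift: "replicate i c @ c # replicate j' c @ w = c # replicate (i + j') c @ w" for i
    by (simp add: replicate_app_Cons_same replicate_add)
  show ?thesis
    using Suc by (simp add: fock_op_def letter_action_def shift)
qed

lemma fock_op_power_replicate:
  assumes "no_head c w"
  shows "(fock_op N \<kappa> c ^^ n) v (replicate j c @ w)
       = (letter_action N \<kappa> ^^ n) (\<lambda>i. v (replicate i c @ w)) j"
proof (induction n arbitrary: j)
  case 0
  then show ?case by simp
next
  case (Suc n)
  have "(fock_op N \<kappa> c ^^ Suc n) v (replicate j c @ w)
      = letter_action N \<kappa> (\<lambda>i. (fock_op N \<kappa> c ^^ n) v (replicate i c @ w)) j"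
    using fock_op_replicate[OF assms] by simp
  then show ?case
    using Suc by simp
qed

lemma letter_action_power_scale:
  "(letter_action N \<kappa> ^^ n) (\<lambda>i. a * d i) = (\<lambda>i. a * (letter_action N \<kappa> ^^ n) d i)"
  by (induction n) (simp_all add: letter_action_def fun_eq_iff sum_distrib_left algebra_simps)

lemma fock_op_power_no_head:
  assumes supp: "\<And>u. v u \<noteq> 0 \<Longrightarrow> no_head c u" and w: "no_head c w"
  shows "(fock_op N \<kappa> c ^^ n) v w = (fock_op N \<kappa> c ^^ n) vacuum [] * v w"
proof -
  have v: "(\<lambda>i. v (replicate i c @ w)) = (\<lambda>i. v w * (if i = 0 then 1 else 0))"
  proof
    fix i show "v (replicate i c @ w) = v w * (if i = 0 then 1 else 0)"
    proof (cases i)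
      case (Suc i')
      then have "\<not> no_head c (replicate i c @ w)" by (simp add: no_head_def)
      then show ?thesis using supp Suc by fastforce
    qed simp
  qed
  have vac: "(\<lambda>i. vacuum (replicate i c @ [])) = (\<lambda>i. if i = 0 then 1 else 0)"
    by (auto simp: vacuum_def fun_eq_iff)
  have "(fock_op N \<kappa> c ^^ n) v w = (fock_op N \<kappa> c ^^ n) v (replicate 0 c @ w)"
    by simp
  also have "\<dots> = v w * (letter_action N \<kappa> ^^ n) (\<lambda>i. if i = 0 then 1 else 0) 0"
    unfolding fock_op_power_replicate[OF w] v letter_action_power_scale by simp
  also have "(letter_action N \<kappa> ^^ n) (\<lambda>i. if i = 0 then 1 else 0) 0
           = (fock_op N \<kappa> c ^^ n) vacuum (replicate 0 c @ [])"
    unfolding fock_op_power_replicate[OF no_head_Nil] vac ..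
  finally show ?thesis
    by simp
qed


section \<open>One letter: the moments of \<open>\<mu>\<close> from its R-transform\<close>

text \<open>Coefficient \<open>n\<close> of \<open>component_series \<mu> m\<close> is the \<open>c\<^sup>m\<close>-component of \<open>T\<^sup>n \<Omega>\<close>, where \<open>T\<close> is
  the \<open>c\<close>-operator with the free cumulants of \<open>\<mu>\<close>; the recursion below is the action of \<open>T\<close>.\<close>
definition component_series :: "(complex poly \<Rightarrow> complex) \<Rightarrow> nat \<Rightarrow> complex fps" where
  "component_series \<mu> m = moment_gf \<mu> * cauchy_series \<mu> ^ m"

lemma component_series_0: "component_series \<mu> 0 = moment_gf \<mu>"
  by (simp add: component_series_def)

lemma component_series_nth_0:
  "\<mu> \<in> Dist \<Longrightarrow> component_series \<mu> m $ 0 = (if m = 0 then 1 else 0)"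
  by (cases m) (simp_all add: component_series_def cauchy_series_def Dist_mom_0)

lemma component_series_Suc_nth:
  assumes \<mu>: "\<mu> \<in> Dist" and "n < N"
  shows "component_series \<mu> m $ Suc n = (if m = 0 then 0 else component_series \<mu> (m - 1) $ n)
           + (\<Sum>j<N. R_transform \<mu> $ Suc j * component_series \<mu> (m + j) $ n)"
proof -
  let ?H = "cauchy_series \<mu>" and ?R = "R_transform \<mu>"
  have H_Suc: "?H ^ Suc k = fps_X * component_series \<mu> k" for k
    by (simp add: cauchy_series_def component_series_def algebra_simps)
  have "component_series \<mu> m = ?H ^ m * (1 + (?R oo ?H))"
    using R_transform_compose_cauchy_series[OF \<mu>] by (simp add: component_series_def)
  then have "component_series \<mu> m $ Suc n = ?H ^ m $ Suc n + (?H ^ m * (?R oo ?H)) $ Suc n"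
    by (simp add: algebra_simps)
  also have "?H ^ m $ Suc n = (if m = 0 then 0 else component_series \<mu> (m - 1) $ n)"
    by (cases m) (simp_all add: H_Suc del: power_Suc)
  also have "(?H ^ m * (?R oo ?H)) $ Suc n = (\<Sum>j<Suc N. ?R $ j * (?H ^ m * ?H ^ j) $ Suc n)"
    by (rule fps_mult_compose_nth) (use \<open>n < N\<close> in auto)
  also have "\<dots> = (\<Sum>j<N. ?R $ Suc j * (?H ^ Suc (m + j)) $ Suc n)"
    by (subst sum.lessThan_Suc_shift) (simp add: \<mu> power_add[symmetric] del: power_Suc)
  also have "\<dots> = (\<Sum>j<N. ?R $ Suc j * component_series \<mu> (m + j) $ n)"
    by (simp only: H_Suc fps_X_mult_nth) simp
  finally show ?thesis .
qed

text \<open>The condition \<open>(\<not> c) \<notin> set w\<close> says that \<open>w\<close> is a power of the letter \<open>c\<close>.\<close>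
lemma fock_op_power_vacuum:
  assumes \<mu>: "\<mu> \<in> Dist" and "n \<le> N"
  shows "(fock_op N (($) (R_transform \<mu>)) c ^^ n) vacuum w
       = (if (\<not> c) \<notin> set w then component_series \<mu> (length w) $ n else 0)"
  using \<open>n \<le> N\<close>
proof (induction n arbitrary: w)
  case 0
  then show ?case
    using component_series_nth_0[OF \<mu>] by (cases w) (auto simp: vacuum_def Dist_mom_0[OF \<mu>])
next
  case (Suc n)
  let ?T = "fock_op N (($) (R_transform \<mu>)) c"
  have IH: "(?T ^^ n) vacuum u = (if (\<not> c) \<notin> set u then component_series \<mu> (length u) $ n else 0)"
    for u using Suc by simp
  have "n < N"
    using Suc by simp
  have "(?T ^^ Suc n) vacuum w
      = (case w of [] \<Rightarrow> 0 | d # w' \<Rightarrow> if d = c then (?T ^^ n) vacuum w' else 0)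
        + (\<Sum>j<N. R_transform \<mu> $ Suc j * (?T ^^ n) vacuum (replicate j c @ w))"
    by (simp add: fock_op_def)
  also have "\<dots> = (if (\<not> c) \<notin> set w then component_series \<mu> (length w) $ Suc n else 0)"
    using component_series_Suc_nth[OF \<mu> \<open>n < N\<close>, of "length w"]
    by (cases w) (auto simp: IH add.commute)
  finally show ?case .
qed


section \<open>Vacuum expectations of words are free products\<close>

fun alternating :: "(bool \<times> nat) list \<Rightarrow> bool" where
  "alternating [] = True"
| "alternating [b] = True"
| "alternating (b1 # b2 # r) = (fst b1 \<noteq> fst b2 \<and> alternating (b2 # r))"

lemma alternating_Cons_cong: "alternating ((b, x) # r) = alternating ((b, y) # r)"
  by (cases r) auto

lemma alternating_merge_blocks: "alternating (merge_blocks w)"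
  by (induction w rule: merge_blocks.induct)
    (auto split: list.splits intro: alternating_Cons_cong[THEN iffD1])

lemma sum_list_snd_merge_blocks: "sum_list (map snd (merge_blocks w)) = sum_list (map snd w)"
proof (induction w rule: merge_blocks.induct)
  case (2 b k w)
  then show ?case
    by (cases "merge_blocks w") auto
qed simp

lemma length_merge_blocks_le: "length (merge_blocks w) \<le> length w"
  by (induction w rule: merge_blocks.induct) (auto split: list.splits)

lemma sum_list_snd_nths_le:
  fixes v :: "('a \<times> nat) list"
  shows "sum_list (map snd (nths v S)) \<le> sum_list (map snd v)"
  by (induction v arbitrary: S) (auto simp: nths_Cons intro: add_mono trans_le_add2)

lemma sum_Pow_lessThan_Suc:
  fixes F :: "nat set \<Rightarrow> 'a::comm_monoid_add"
  shows "(\<Sum>S\<in>Pow {..<Suc n}. F S)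
       = (\<Sum>S\<in>Pow {..<n}. F (Suc ` S)) + (\<Sum>S\<in>Pow {..<n}. F (insert 0 (Suc ` S)))"
proof -
  let ?B = "Suc ` {..<n}"
  have bij: "bij_betw (image Suc) (Pow {..<n}) (Pow ?B)"
    by (rule bij_betw_image_Pow) (simp add: bij_betw_def)
  have inj: "inj_on (insert 0) (Pow ?B)"
    by (rule inj_onI) (auto simp: insert_ident)
  have "(\<Sum>S\<in>Pow {..<Suc n}. F S) = (\<Sum>T\<in>Pow ?B. F T) + (\<Sum>T\<in>insert 0 ` Pow ?B. F T)"
    unfolding lessThan_Suc_eq_insert_0 Pow_insert by (rule sum.union_disjoint) auto
  also have "(\<Sum>T\<in>insert 0 ` Pow ?B. F T) = (\<Sum>T\<in>Pow ?B. F (insert 0 T))"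
    using sum.reindex[OF inj] by simp
  also have "(\<Sum>T\<in>Pow ?B. F T) = (\<Sum>S\<in>Pow {..<n}. F (Suc ` S))"
    using sum.reindex_bij_betw[OF bij, of F] by simp
  also have "(\<Sum>T\<in>Pow ?B. F (insert 0 T)) = (\<Sum>S\<in>Pow {..<n}. F (insert 0 (Suc ` S)))"
    using sum.reindex_bij_betw[OF bij, of "\<lambda>T. F (insert 0 T)"] by simp
  finally show ?thesis .
qed

lemma sum_Pow_nths_Cons:
  fixes f :: "'a \<Rightarrow> 'b::comm_semiring_1" and G :: "'a list \<Rightarrow> 'b"
  shows "(\<Sum>S\<in>Pow {..<length (x # xs)}.
            (\<Prod>i\<in>{..<length (x # xs)} - S. f ((x # xs) ! i)) * G (nths (x # xs) S))
       = (\<Sum>S\<in>Pow {..<length xs}. (\<Prod>i\<in>{..<length xs} - S. f (xs ! i)) * G (x # nths xs S))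
         + (\<Sum>S\<in>Pow {..<length xs}. f x * (\<Prod>i\<in>{..<length xs} - S. f (xs ! i)) * G (nths xs S))"
proof -
  let ?n = "length xs"
  have "{..<Suc ?n} - Suc ` S = insert 0 (Suc ` ({..<?n} - S))" for S
    by (auto simp: image_iff lessThan_Suc_eq_insert_0)
  then have drop: "(\<Prod>i\<in>{..<Suc ?n} - Suc ` S. f ((x # xs) ! i)) = f x * (\<Prod>i\<in>{..<?n} - S. f (xs ! i))"
    for S by (simp add: prod.reindex image_iff)
  have "{..<Suc ?n} - insert 0 (Suc ` S) = Suc ` ({..<?n} - S)" for S
    by (auto simp: image_iff lessThan_Suc_eq_insert_0)
  then have keep: "(\<Prod>i\<in>{..<Suc ?n} - insert 0 (Suc ` S). f ((x # xs) ! i))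
      = (\<Prod>i\<in>{..<?n} - S. f (xs ! i))" for S
    by (simp add: prod.reindex)
  have "nths (x # xs) (Suc ` S) = nths xs S" and "nths (x # xs) (insert 0 (Suc ` S)) = x # nths xs S"
    for S by (simp_all add: nths_Cons image_iff)
  then show ?thesis
    by (simp only: length_Cons sum_Pow_lessThan_Suc drop keep) (simp add: add.commute)
qed

lemma sum_bool_lists_length_Suc:
  "(\<Sum>x\<in>{x::bool list. length x = Suc n}. g x)
     = (\<Sum>x\<in>{x::bool list. length x = n}. g (True # x) + g (False # x))"
proof -
  let ?A = "{x::bool list. length x = n}"
  have fin: "finite ?A" using finite_lists_length_eq[of "UNIV :: bool set" n] by simp
  have eq: "{x::bool list. length x = Suc n} = Cons True ` ?A \<union> Cons False ` ?A"
  proof (intro equalityI subsetI)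
    fix x :: "bool list" assume "x \<in> {x. length x = Suc n}"
    then obtain b y where "x = b # y" "length y = n" by (cases x) auto
    then show "x \<in> Cons True ` ?A \<union> Cons False ` ?A" by (cases b) auto
  qed auto
  have "(\<Sum>x\<in>{x::bool list. length x = Suc n}. g x)
      = sum g (Cons True ` ?A) + sum g (Cons False ` ?A)"
    unfolding eq by (rule sum.union_disjoint) (use fin in auto)
  also have "\<dots> = (\<Sum>x\<in>?A. g (True # x)) + (\<Sum>x\<in>?A. g (False # x))"
    by (simp add: sum.reindex)
  finally show ?thesis by (simp add: sum.distrib)
qed

locale fock_model =
  fixes N :: nat and k1 k2 :: "nat \<Rightarrow> complex"
begin

definition letter_op :: "bool \<Rightarrow> fock_vec \<Rightarrow> fock_vec" where
  "letter_op c = fock_op N (if c then k1 else k2) c"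

definition block_op :: "bool \<times> nat \<Rightarrow> fock_vec \<Rightarrow> fock_vec" where
  "block_op b = letter_op (fst b) ^^ snd b"

fun word_op :: "(bool \<times> nat) list \<Rightarrow> fock_vec \<Rightarrow> fock_vec" where
  "word_op [] v = v"
| "word_op (b # bs) v = block_op b (word_op bs v)"

definition vacuum_state :: "(bool \<times> nat) list \<Rightarrow> complex" where
  "vacuum_state w = word_op w vacuum []"

definition block_mean :: "bool \<times> nat \<Rightarrow> complex" where
  "block_mean b = block_op b vacuum []"

fun centered_vec :: "(bool \<times> nat) list \<Rightarrow> fock_vec" where
  "centered_vec [] = vacuum"
| "centered_vec (b # bs) = (\<lambda>w. block_op b (centered_vec bs) w - block_mean b * centered_vec bs w)"

lemma linear_op_letter_op: "linear_op (letter_op c)"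
  by (simp add: letter_op_def linear_op_fock_op)

lemma linear_op_block_op: "linear_op (block_op b)"
  by (simp add: block_op_def linear_op_funpow linear_op_letter_op)

lemma word_op_append: "word_op (xs @ ys) v = word_op xs (word_op ys v)"
  by (induction xs) auto

lemma word_op_merge_blocks: "word_op (merge_blocks w) v = word_op w v"
  by (induction w arbitrary: v rule: merge_blocks.induct)
    (auto simp: block_op_def funpow_add split: list.splits)

text \<open>Centring kills every component not beginning with the block's own letter.\<close>
lemma block_op_no_head:
  assumes "\<And>u. v u \<noteq> 0 \<Longrightarrow> no_head c u" and "no_head c w"
  shows "block_op (c, n) v w = block_mean (c, n) * v w"
  using fock_op_power_no_head[OF assms] by (simp add: block_mean_def block_op_def letter_op_def)

lemma centered_vec_support:
  assumes "alternating ((c, n) # bs)" and "centered_vec ((c, n) # bs) u \<noteq> 0"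
  shows "u \<noteq> [] \<and> hd u = c"
  using assms
proof (induction bs arbitrary: c n u)
  case Nil
  have "vacuum u \<noteq> 0 \<Longrightarrow> no_head c u" for u
    by (simp add: vacuum_def split: if_splits)
  then have "no_head c u \<Longrightarrow> centered_vec [(c, n)] u = 0"
    by (simp add: block_op_no_head)
  then show ?case
    using Nil.prems by (auto simp: no_head_def)
next
  case (Cons b bs)
  obtain c' n' where b: "b = (c', n')"
    by (cases b)
  have "c' \<noteq> c" and "alternating ((c', n') # bs)"
    using Cons.prems b by auto
  then have "centered_vec (b # bs) u \<noteq> 0 \<Longrightarrow> no_head c u" for u
    using Cons.IH b by (auto simp: no_head_def)
  note block_op_no_head[OF this]
  then have "no_head c u \<Longrightarrow> centered_vec ((c, n) # b # bs) u = 0"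
    by (simp only: centered_vec.simps(2)[of "(c, n)" "b # bs"]) (simp del: centered_vec.simps)
  then show ?case
    using Cons.prems by (auto simp: no_head_def)
qed

lemma centered_vec_Nil: "alternating bs \<Longrightarrow> bs \<noteq> [] \<Longrightarrow> centered_vec bs [] = 0"
  using centered_vec_support by (cases bs) fastforce+

lemma centered_vec_expand:
  "centered_vec bs w = (\<Sum>S\<in>Pow {..<length bs}.
     (\<Prod>i\<in>{..<length bs} - S. - block_mean (bs ! i)) * word_op (nths bs S) vacuum w)"
proof (induction bs arbitrary: w)
  case Nil
  then show ?case by simp
next
  case (Cons b bs)
  let ?c = "\<lambda>S. \<Prod>i\<in>{..<length bs} - S. - block_mean (bs ! i)"
  have IH: "centered_vec bs = (\<lambda>w. \<Sum>S\<in>Pow {..<length bs}. ?c S * word_op (nths bs S) vacuum w)"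
    using Cons by auto
  have "block_op b (centered_vec bs)
      = (\<lambda>w. \<Sum>S\<in>Pow {..<length bs}. ?c S * word_op (b # nths bs S) vacuum w)"
    unfolding IH by (simp add: linear_op_sum_scale[OF linear_op_block_op])
  then have "centered_vec (b # bs) w
      = (\<Sum>S\<in>Pow {..<length bs}. ?c S * word_op (b # nths bs S) vacuum w)
        - block_mean b * (\<Sum>S\<in>Pow {..<length bs}. ?c S * word_op (nths bs S) vacuum w)"
    by (simp only: centered_vec.simps(2) IH)
  also have "\<dots> = (\<Sum>S\<in>Pow {..<length bs}. ?c S * word_op (b # nths bs S) vacuum w)
      + (\<Sum>S\<in>Pow {..<length bs}. - block_mean b * ?c S * word_op (nths bs S) vacuum w)"
    by (simp add: sum_distrib_left algebra_simps sum_negf)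
  also have "\<dots> = (\<Sum>S\<in>Pow {..<length (b # bs)}.
      (\<Prod>i\<in>{..<length (b # bs)} - S. - block_mean ((b # bs) ! i)) * word_op (nths (b # bs) S) vacuum w)"
    by (rule sum_Pow_nths_Cons[where f = "\<lambda>b. - block_mean b", symmetric])
  finally show ?case .
qed

text \<open>The centred vector of an alternating word vanishes at the vacuum; expanding it gives
  exactly the recursion defining \<open>free_state_aux\<close>.\<close>
lemma vacuum_state_alternating:
  assumes "alternating v" and "v \<noteq> []"
  defines "n \<equiv> length v"
  shows "vacuum_state v = - (\<Sum>S\<in>Pow {..<n} - {{..<n}}.
           (\<Prod>i\<in>{..<n} - S. - block_mean (v ! i)) * vacuum_state (nths v S))"
proof -
  let ?c = "\<lambda>S. \<Prod>i\<in>{..<n} - S. - block_mean (v ! i)"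
  have "0 = centered_vec v []"
    using centered_vec_Nil[OF assms(1,2)] by simp
  also have "\<dots> = (\<Sum>S\<in>Pow {..<n}. ?c S * vacuum_state (nths v S))"
    by (simp add: centered_vec_expand vacuum_state_def n_def)
  also have "\<dots> = ?c {..<n} * vacuum_state (nths v {..<n})
                  + (\<Sum>S\<in>Pow {..<n} - {{..<n}}. ?c S * vacuum_state (nths v S))"
    by (subst sum.remove[of _ "{..<n}"]) auto
  also have "?c {..<n} * vacuum_state (nths v {..<n}) = vacuum_state v"
    by (simp add: n_def nths_all)
  finally show ?thesis
    by (simp add: eq_neg_iff_add_eq_0 add.commute)
qed

theorem free_state_aux_eq_vacuum_state:
  assumes m1: "\<And>k. k \<le> N \<Longrightarrow> m1 k = vacuum_state [(True, k)]"
    and m2: "\<And>k. k \<le> N \<Longrightarrow> m2 k = vacuum_state [(False, k)]"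
  shows "length w \<le> f \<Longrightarrow> sum_list (map snd w) \<le> N
           \<Longrightarrow> free_state_aux f m1 m2 w = vacuum_state w"
proof (induction f arbitrary: w)
  case 0
  then show ?case by (simp add: vacuum_state_def vacuum_def)
next
  case (Suc f)
  define v where "v = merge_blocks w"
  define n where "n = length v"
  have "vacuum_state w = vacuum_state v"
    by (simp add: vacuum_state_def v_def word_op_merge_blocks)
  have sum_v: "sum_list (map snd v) \<le> N"
    using Suc.prems sum_list_snd_merge_blocks by (simp add: v_def)
  have "n \<le> Suc f"
    using Suc.prems length_merge_blocks_le[of w] by (simp add: n_def v_def)
  show ?case
  proof (cases "n = 0")
    case True
    then show ?thesis
      using \<open>vacuum_state w = vacuum_state v\<close>
      by (simp add: v_def n_def vacuum_state_def vacuum_def Let_def)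
  next
    case False
    have block: "block_mom m1 m2 (v ! i) = block_mean (v ! i)" if "i < n" for i
    proof -
      have "snd (v ! i) \<le> sum_list (map snd v)"
        using elem_le_sum_list[of i "map snd v"] that by (simp add: n_def)
      then show ?thesis
        using m1 m2 sum_v by (cases "v ! i") (simp add: block_mom_def block_mean_def vacuum_state_def)
    qed
    have IH: "free_state_aux f m1 m2 (nths v S) = vacuum_state (nths v S)"
      if "S \<in> Pow {..<n} - {{..<n}}" for S
    proof (rule Suc.IH)
      have "card S < n"
        using that by (metis Diff_iff Pow_iff card_lessThan finite_lessThan psubset_card_mono
            psubsetI singletonI)
      moreover have "{i. i < n \<and> i \<in> S} = S"
        using that by auto
      ultimately show "length (nths v S) \<le> f"
        using \<open>n \<le> Suc f\<close> by (simp add: length_nths n_def)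
      show "sum_list (map snd (nths v S)) \<le> N"
        using sum_list_snd_nths_le[of v S] sum_v by simp
    qed
    have "free_state_aux (Suc f) m1 m2 w = - (\<Sum>S\<in>Pow {..<n} - {{..<n}}.
            (\<Prod>i\<in>{..<n} - S. - block_mom m1 m2 (v ! i)) * free_state_aux f m1 m2 (nths v S))"
      using False by (simp add: Let_def v_def n_def)
    also have "\<dots> = - (\<Sum>S\<in>Pow {..<n} - {{..<n}}.
            (\<Prod>i\<in>{..<n} - S. - block_mean (v ! i)) * vacuum_state (nths v S))"
      by (intro arg_cong[where f=uminus] sum.cong refl arg_cong2[where f="(*)"] prod.cong)
        (auto simp: block IH)
    also have "\<dots> = vacuum_state v"
      using vacuum_state_alternating[OF alternating_merge_blocks[of w, folded v_def]] False
      by (simp add: n_def)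
    finally show ?thesis
      using \<open>vacuum_state w = vacuum_state v\<close> by simp
  qed
qed

definition sum_op :: "fock_vec \<Rightarrow> fock_vec" where
  "sum_op v = (\<lambda>w. letter_op True v w + letter_op False v w)"

lemma block_op_1: "block_op (c, Suc 0) = letter_op c"
  by (simp add: block_op_def)

lemma sum_op_power_eq:
  "(sum_op ^^ n) v w = (\<Sum>x\<in>{x::bool list. length x = n}. word_op (map (\<lambda>b. (b, 1)) x) v w)"
proof (induction n arbitrary: w)
  case 0
  then show ?case by simp
next
  case (Suc n)
  let ?A = "{x::bool list. length x = n}"
  have "finite ?A"
    using finite_lists_length_eq[of "UNIV :: bool set" n] by simp
  moreover have "(sum_op ^^ n) v = (\<lambda>w. \<Sum>x\<in>?A. word_op (map (\<lambda>b. (b, 1)) x) v w)"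
    using Suc by auto
  ultimately have "letter_op c ((sum_op ^^ n) v)
      = (\<lambda>w. \<Sum>x\<in>?A. letter_op c (word_op (map (\<lambda>b. (b, 1)) x) v) w)" for c
    by (simp add: linear_op_sum[OF linear_op_letter_op])
  then have "(sum_op ^^ Suc n) v w
      = (\<Sum>x\<in>?A. letter_op True (word_op (map (\<lambda>b. (b, 1)) x) v) w)
        + (\<Sum>x\<in>?A. letter_op False (word_op (map (\<lambda>b. (b, 1)) x) v) w)"
    by (simp add: sum_op_def[of "(sum_op ^^ n) v"])
  then show ?case
    by (simp add: sum_bool_lists_length_Suc sum.distrib block_op_1)
qed

lemma word_op_alternating:
  "word_op (concat (replicate n [(True, 1), (False, 1)])) v
     = ((\<lambda>u. letter_op True (letter_op False u)) ^^ n) v"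
  by (induction n) (simp_all add: word_op_append block_op_1)

end


section \<open>The R-transform linearises additive free convolution\<close>

lemma fock_model_vacuum_state_block:
  assumes "\<mu> \<in> Dist" and "\<nu> \<in> Dist" and "k \<le> N"
  shows "fock_model.vacuum_state N (($) (R_transform \<mu>)) (($) (R_transform \<nu>)) [(True, k)]
           = mom \<mu> k"
    and "fock_model.vacuum_state N (($) (R_transform \<mu>)) (($) (R_transform \<nu>)) [(False, k)]
           = mom \<nu> k"
  using fock_op_power_vacuum[OF assms(1,3), of True "[]"]
    fock_op_power_vacuum[OF assms(2,3), of False "[]"]
  by (simp_all add: component_series_0 fock_model.vacuum_state_def fock_model.word_op.simps
      fock_model.block_op_def fock_model.letter_op_def)

lemma free_state_eq_vacuum_state:
  assumes "\<mu> \<in> Dist" and "\<nu> \<in> Dist" and "sum_list (map snd w) \<le> N"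
  shows "free_state (mom \<mu>) (mom \<nu>) w
       = fock_model.vacuum_state N (($) (R_transform \<mu>)) (($) (R_transform \<nu>)) w"
  unfolding free_state_def
  by (rule fock_model.free_state_aux_eq_vacuum_state)
    (use fock_model_vacuum_state_block[OF assms(1,2)] assms(3) in auto)

lemma sum_op_power_vacuum:
  assumes \<rho>: "\<rho> \<in> Dist" and k: "\<And>j. k1 j + k2 j = R_transform \<rho> $ j" and "n \<le> N"
  shows "(fock_model.sum_op N k1 k2 ^^ n) vacuum w = component_series \<rho> (length w) $ n"
  using \<open>n \<le> N\<close>
proof (induction n arbitrary: w)
  case 0
  then show ?case
    using component_series_nth_0[OF \<rho>] by (cases w) (auto simp: vacuum_def Dist_mom_0[OF \<rho>])
next
  case (Suc n)
  let ?P = "(fock_model.sum_op N k1 k2 ^^ n) vacuum"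
  have IH: "?P u = component_series \<rho> (length u) $ n" for u
    using Suc by auto
  have "n < N"
    using Suc by simp
  have "(fock_model.sum_op N k1 k2 ^^ Suc n) vacuum w
      = fock_op N k1 True ?P w + fock_op N k2 False ?P w"
    by (simp add: fock_model.sum_op_def fock_model.letter_op_def)
  also have "\<dots> = (case w of [] \<Rightarrow> 0 | d # w' \<Rightarrow> ?P w')
                 + (\<Sum>j<N. (k1 (Suc j) + k2 (Suc j)) * component_series \<rho> (length w + j) $ n)"
    by (cases w) (auto simp: fock_op_def IH sum.distrib algebra_simps)
  also have "\<dots> = component_series \<rho> (length w) $ Suc n"
    by (cases w) (simp_all add: component_series_Suc_nth[OF \<rho> \<open>n < N\<close>] k IH)
  finally show ?case .
qed

lemma free_add_conv_eqI:
  assumes \<mu>: "\<mu> \<in> Dist" and \<nu>: "\<nu> \<in> Dist" and \<rho>: "\<rho> \<in> Dist"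
    and R: "R_transform \<rho> = R_transform \<mu> + R_transform \<nu>"
  shows "free_add_conv \<mu> \<nu> = \<rho>"
proof -
  have "(\<Sum>w \<in> {w. length w = n}. free_state (mom \<mu>) (mom \<nu>) (map (\<lambda>b. (b, 1)) w)) = mom \<rho> n" for n
  proof -
    interpret fock_model "Suc n" "($) (R_transform \<mu>)" "($) (R_transform \<nu>)" .
    have "free_state (mom \<mu>) (mom \<nu>) (map (\<lambda>b. (b, 1)) w) = word_op (map (\<lambda>b. (b, 1)) w) vacuum []"
      if "length w = n" for w :: "bool list"
    proof -
      have "sum_list (map snd (map (\<lambda>b. (b, 1::nat)) w)) = length w"
        by (induction w) auto
      then show ?thesis
        using free_state_eq_vacuum_state[OF \<mu> \<nu>, of _ "Suc n"] that by (simp add: vacuum_state_def)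
    qed
    then have "(\<Sum>w \<in> {w. length w = n}. free_state (mom \<mu>) (mom \<nu>) (map (\<lambda>b. (b, 1)) w))
        = (\<Sum>w \<in> {w. length w = n}. word_op (map (\<lambda>b. (b, 1)) w) vacuum [])"
      by simp
    also have "\<dots> = (sum_op ^^ n) vacuum []"
      by (simp add: sum_op_power_eq)
    also have "\<dots> = mom \<rho> n"
      using sum_op_power_vacuum[OF \<rho>, of _ _ n "Suc n" "[]"] R by (simp add: component_series_0)
    finally show ?thesis .
  qed
  then show ?thesis
    using Dist_functional_of_moments[OF \<rho>] by (simp add: free_add_conv_def)
qed


section \<open>The S-transform multiplicativises multiplicative free convolution\<close>

text \<open>An ansatz for the product \<open>a b\<close> of the two letter operators, \<open>m\<close> being the moment
  series it should produce: \<open>word_series w True\<close> and \<open>word_series w False\<close> are the generating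
  functions in \<open>n\<close> of the \<open>w\<close>-components of \<open>(a b)\<^sup>n \<Omega>\<close> and of \<open>b (a b)\<^sup>n \<Omega>\<close> (the latter
  shifted by one). The assumptions hold when \<open>\<alpha>, \<beta>\<close> come from the subordination functions.\<close>
locale mult_model = fock_model N k1 k2 for N k1 k2 +
  fixes m \<alpha> \<beta> y v :: "complex fps"
  assumes m0: "m $ 0 = 1"
    and y0: "y $ 0 = 0"
    and y_eq: "y = m * \<beta>"
    and v_eq: "v = m * \<alpha>"
    and m_eq: "m = 1 + m * \<alpha> * \<beta>"
    and alpha_eq: "\<alpha> = Abs_fps (\<lambda>j. k1 (Suc j)) oo y"
    and beta_eq: "\<beta> = fps_X * (Abs_fps (\<lambda>j. k2 (Suc j)) oo (fps_X * v))"
begin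

definition transfer :: "bool \<Rightarrow> bool \<Rightarrow> complex fps" where
  "transfer p q = (if p = q then m else if p then y else v)"

fun word_series :: "bool list \<Rightarrow> bool \<Rightarrow> complex fps" where
  "word_series [] f = transfer True f"
| "word_series (c # w) f = word_series w (\<not> c) * (if c then 1 else fps_X) * transfer c f"

lemma word_series_nth_0:
  "word_series w False $ 0 = 0 \<and> word_series w True $ 0 = (if w = [] then 1 else 0)"
  by (induction w) (auto simp: transfer_def m0 y0)

text \<open>In the following two lemmas the locale parameters must not be rewritten by \<open>simp\<close>, since
  they also occur inside \<open>word_series\<close>; hence the relations are used in multiplied form.\<close>
lemma word_series_True:
  "word_series w True = (if w = [] then 1 else 0)
     + (case w of [] \<Rightarrow> 0 | d # w' \<Rightarrow> if d then word_series w' False else 0) + word_series w False * \<alpha>"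
proof -
  have m: "g * m = g + g * y * \<alpha>" for g
    by (subst m_eq) (simp add: y_eq algebra_simps)
  have v: "g * fps_X * v = g * fps_X * m * \<alpha>" for g
    by (simp add: v_eq algebra_simps)
  show ?thesis
  proof (cases w)
    case Nil
    then show ?thesis
      by (simp add: transfer_def) (use m[of 1] in simp)
  next
    case (Cons d w')
    then show ?thesis
      using m[of "word_series w' False"] v[of "word_series w' True"]
      by (cases d) (simp_all add: transfer_def)
  qed
qed

lemma word_series_False:
  "word_series w False = fps_X * (case w of [] \<Rightarrow> 0 | d # w' \<Rightarrow> if d then 0 else word_series w' True)
     + word_series w True * \<beta>"
proof -
  have m: "g * fps_X * m = fps_X * g + g * fps_X * v * \<beta>" for g
    by (subst m_eq) (simp add: v_eq algebra_simps)
  have y: "g * y = g * m * \<beta>" for g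
    by (simp add: y_eq algebra_simps)
  show ?thesis
  proof (cases w)
    case Nil
    then show ?thesis
      by (simp add: transfer_def) (simp add: y_eq)
  next
    case (Cons d w')
    then show ?thesis
      using m[of "word_series w' True"] y[of "word_series w' False"]
      by (cases d) (simp_all add: transfer_def mult.assoc)
  qed
qed

lemma word_series_replicate_True:
  "word_series (replicate j True @ w) False = word_series w False * y ^ j"
  by (induction j) (simp_all add: transfer_def algebra_simps)

lemma word_series_replicate_False:
  "word_series (replicate j False @ w) True = word_series w True * (fps_X * v) ^ j"
  by (induction j) (simp_all add: transfer_def algebra_simps)

lemma letter_op_apply: "letter_op c u w = (case w of [] \<Rightarrow> 0 | d # w' \<Rightarrow> if d = c then u w' else 0)
    + (\<Sum>j<N. (if c then k1 else k2) (Suc j) * u (replicate j c @ w))"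
  by (simp add: letter_op_def fock_op_def)

lemma alternating_power_vacuum:
  assumes "n < N"
  shows "((\<lambda>u. letter_op True (letter_op False u)) ^^ n) vacuum w = word_series w True $ n"
  using assms
proof (induction n arbitrary: w)
  case 0
  then show ?case
    using word_series_nth_0[of w] by (simp add: vacuum_def)
next
  case (Suc n)
  let ?P = "((\<lambda>u. letter_op True (letter_op False u)) ^^ n) vacuum"
  have IH: "?P u = word_series u True $ n" for u
    using Suc by simp
  define Q where "Q = letter_op False ?P"
  have Q: "Q u = word_series u False $ Suc n" for u
  proof -
    have "Q u = (case u of [] \<Rightarrow> 0 | d # w' \<Rightarrow> if d = False then ?P w' else 0)
                + (\<Sum>j<N. k2 (Suc j) * ?P (replicate j False @ u))"
      unfolding Q_def letter_op_apply by simp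
    also have "(\<Sum>j<N. k2 (Suc j) * ?P (replicate j False @ u))
        = (\<Sum>j<N. Abs_fps (\<lambda>j. k2 (Suc j)) $ j * (word_series u True * (fps_X * v) ^ j) $ n)"
      by (simp add: IH word_series_replicate_False)
    also have "\<dots> = (word_series u True * (Abs_fps (\<lambda>j. k2 (Suc j)) oo (fps_X * v))) $ n"
      using Suc.prems by (intro fps_mult_compose_nth[symmetric]) simp_all
    also have "\<dots> = (word_series u True * \<beta>) $ Suc n"
      by (simp add: beta_eq mult.left_commute[of _ fps_X])
    also have "(case u of [] \<Rightarrow> 0 | d # w' \<Rightarrow> if d = False then ?P w' else 0)
        = (fps_X * (case u of [] \<Rightarrow> 0 | d # w' \<Rightarrow> if d then 0 else word_series w' True)) $ Suc n"
      by (cases u) (auto simp: IH)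
    finally show ?thesis
      by (subst word_series_False) simp
  qed
  have "((\<lambda>u. letter_op True (letter_op False u)) ^^ Suc n) vacuum w = letter_op True Q w"
    by (simp add: Q_def)
  also have "\<dots> = (case w of [] \<Rightarrow> 0 | d # w' \<Rightarrow> if d = True then Q w' else 0)
                  + (\<Sum>j<N. k1 (Suc j) * Q (replicate j True @ w))"
    unfolding letter_op_apply by simp
  also have "(\<Sum>j<N. k1 (Suc j) * Q (replicate j True @ w))
      = (\<Sum>j<N. Abs_fps (\<lambda>j. k1 (Suc j)) $ j * (word_series w False * y ^ j) $ Suc n)"
    by (simp add: Q word_series_replicate_True)
  also have "\<dots> = (word_series w False * \<alpha>) $ Suc n"
    unfolding alpha_eq using Suc.prems by (intro fps_mult_compose_nth[symmetric]) (simp_all add: y0)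
  also have "(case w of [] \<Rightarrow> 0 | d # w' \<Rightarrow> if d = True then Q w' else 0)
      = (case w of [] \<Rightarrow> 0 | d # w' \<Rightarrow> if d then word_series w' False else 0) $ Suc n"
    by (cases w) (auto simp: Q)
  finally show ?case
    by (subst word_series_True) simp
qed

end


lemma subordination_function:
  assumes \<mu>: "\<mu> \<in> Dist1x" and \<rho>: "\<rho> \<in> Dist1x"
  defines "\<omega> \<equiv> fps_inv (moment_series \<mu>) oo moment_series \<rho>"
  shows "\<omega> $ 0 = 0" and "\<omega> $ Suc 0 = 1" and "moment_series \<mu> oo \<omega> = moment_series \<rho>"
proof -
  show "\<omega> $ 0 = 0"
    by (simp add: \<omega>_def)
  show "\<omega> $ Suc 0 = 1"
    using \<mu> \<rho> by (simp add: \<omega>_def fps_compose_nth numeral_2_eq_2 atLeast0_atMost_Suc)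
  have "moment_series \<mu> oo fps_inv (moment_series \<mu>) = fps_X"
    using \<mu> by (intro fps_inv_right) simp_all
  then show "moment_series \<mu> oo \<omega> = moment_series \<rho>"
    by (simp add: \<omega>_def fps_compose_assoc)
qed

text \<open>This is \<open>S\<^sub>\<rho> = S\<^sub>\<mu> S\<^sub>\<nu>\<close> composed with \<open>M\<^sub>\<rho>\<close>: the product of the two subordination functions
  is \<open>z M\<^sub>\<rho> / (1 + M\<^sub>\<rho>)\<close>.\<close>
lemma S_transform_mult_subordination:
  assumes \<mu>: "\<mu> \<in> Dist1x" and \<nu>: "\<nu> \<in> Dist1x" and \<rho>: "\<rho> \<in> Dist1x"
    and S: "S_transform \<rho> = S_transform \<mu> * S_transform \<nu>"
  shows "(fps_inv (moment_series \<mu>) oo moment_series \<rho>)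
           * (fps_inv (moment_series \<nu>) oo moment_series \<rho>) * (1 + moment_series \<rho>)
         = fps_X * moment_series \<rho>"
proof -
  let ?I = "\<lambda>\<sigma>. fps_inv (moment_series \<sigma>)"
  have "(fps_X * S_transform \<rho>) * fps_X = (fps_X * S_transform \<mu>) * (fps_X * S_transform \<nu>)"
    using S by (simp add: algebra_simps)
  then have "(1 + fps_X) * (fps_X * ?I \<rho>) = (1 + fps_X) * ((1 + fps_X) * ?I \<mu> * ?I \<nu>)"
    by (simp add: fps_X_mult_S_transform algebra_simps)
  then have "fps_X * ?I \<rho> = (1 + fps_X) * ?I \<mu> * ?I \<nu>"
    using one_plus_fps_X_neq_0 mult_left_cancel by blast
  then have "(fps_X * ?I \<rho>) oo moment_series \<rho> = ((1 + fps_X) * ?I \<mu> * ?I \<nu>) oo moment_series \<rho>"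
    by simp
  moreover have "?I \<rho> oo moment_series \<rho> = fps_X"
    using \<rho> by (intro fps_inv) simp_all
  ultimately show ?thesis
    by (simp add: fps_compose_mult_distrib fps_compose_add_distrib algebra_simps)
qed

lemma R_transform_compose_subordinate:
  assumes \<mu>: "\<mu> \<in> Dist" and \<rho>: "\<rho> \<in> Dist" and \<omega>0: "\<omega> $ 0 = 0"
    and \<omega>: "moment_series \<mu> oo \<omega> = moment_series \<rho>"
  shows "R_transform \<mu> oo (\<omega> * moment_gf \<rho>) = moment_gf \<rho> - 1"
proof -
  have H: "cauchy_series \<mu> oo \<omega> = \<omega> * moment_gf \<rho>"
    using \<omega>0 \<omega> by (simp add: cauchy_series_def moment_gf_eq_1_plus_moment_series \<mu> \<rho>
        fps_compose_mult_distrib fps_compose_add_distrib)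
  have "R_transform \<mu> oo (cauchy_series \<mu> oo \<omega>) = (R_transform \<mu> oo cauchy_series \<mu>) oo \<omega>"
    using \<omega>0 by (intro fps_compose_assoc) simp_all
  then show ?thesis
    using \<omega>0 \<omega> by (simp add: H R_transform_compose_cauchy_series \<mu> moment_gf_eq_1_plus_moment_series \<rho>
        fps_compose_sub_distrib)
qed

lemma S_transform_mult_model:
  assumes \<mu>: "\<mu> \<in> Dist1x" and \<nu>: "\<nu> \<in> Dist1x" and \<rho>: "\<rho> \<in> Dist1x"
    and S: "S_transform \<rho> = S_transform \<mu> * S_transform \<nu>"
  obtains \<alpha> \<beta> y v
  where "mult_model (($) (R_transform \<mu>)) (($) (R_transform \<nu>)) (moment_gf \<rho>) \<alpha> \<beta> y v"
proof -
  have \<mu>': "\<mu> \<in> Dist" and \<nu>': "\<nu> \<in> Dist" and \<rho>': "\<rho> \<in> Dist"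
    using \<mu> \<nu> \<rho> Dist1x_subset_Dist by auto
  define m where "m = moment_gf \<rho>"
  define \<beta> where "\<beta> = fps_inv (moment_series \<mu>) oo moment_series \<rho>"
  define \<omega>\<^sub>2 where "\<omega>\<^sub>2 = fps_inv (moment_series \<nu>) oo moment_series \<rho>"
  define \<alpha> where "\<alpha> = fps_shift 1 \<omega>\<^sub>2"
  define y where "y = m * \<beta>"
  define v where "v = m * \<alpha>"
  note \<beta> = subordination_function[OF \<mu> \<rho>, folded \<beta>_def]
  note \<omega>\<^sub>2 = subordination_function[OF \<nu> \<rho>, folded \<omega>\<^sub>2_def]
  have m0: "m $ 0 = 1"
    by (simp add: m_def Dist_mom_0 \<rho>')
  have m: "m = 1 + moment_series \<rho>"
    by (simp add: m_def moment_gf_eq_1_plus_moment_series \<rho>')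
  have \<omega>\<^sub>2_eq: "\<omega>\<^sub>2 = fps_X * \<alpha>"
    unfolding \<alpha>_def using \<omega>\<^sub>2(1) by (simp add: fps_X_mult_fps_shift_1)
  have "fps_X * (m * \<alpha> * \<beta>) = fps_X * (m - 1)"
    using S_transform_mult_subordination[OF \<mu> \<nu> \<rho> S, folded \<beta>_def \<omega>\<^sub>2_def]
    by (simp add: \<omega>\<^sub>2_eq m algebra_simps)
  then have m_\<alpha>_\<beta>: "m * \<alpha> * \<beta> = m - 1"
    by simp
  have y0: "y $ 0 = 0" and y1: "y $ Suc 0 = 1"
    using \<beta> m0 by (simp_all add: y_def fps_mult_nth atLeast0_atMost_Suc)
  have v0: "v $ 0 = 1"
    using \<omega>\<^sub>2(2) m0 by (simp add: v_def \<alpha>_def)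
  have "y * (fps_shift 1 (R_transform \<mu>) oo y) = R_transform \<mu> oo y"
    using y0 \<mu>' by (simp add: fps_compose_eq_mult_shift)
  also have "\<dots> = moment_gf \<rho> - 1"
    using R_transform_compose_subordinate[OF \<mu>' \<rho>' \<beta>(1,3)] by (simp add: y_def m_def mult.commute)
  also have "\<dots> = y * \<alpha>"
    using m_\<alpha>_\<beta> by (simp add: y_def m_def algebra_simps)
  finally have \<alpha>: "\<alpha> = Abs_fps (\<lambda>j. R_transform \<mu> $ Suc j) oo y"
    using y1 by (auto simp: Abs_fps_nth_Suc)
  have "v * (fps_X * (fps_shift 1 (R_transform \<nu>) oo (fps_X * v))) = R_transform \<nu> oo (fps_X * v)"
    using \<nu>' by (simp add: fps_compose_eq_mult_shift algebra_simps)
  also have "\<dots> = moment_gf \<rho> - 1"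
    using R_transform_compose_subordinate[OF \<nu>' \<rho>' \<omega>\<^sub>2(1,3)]
    by (simp add: v_def \<omega>\<^sub>2_eq m_def algebra_simps)
  also have "\<dots> = v * \<beta>"
    using m_\<alpha>_\<beta> by (simp add: v_def m_def algebra_simps)
  finally have \<beta>_eq: "\<beta> = fps_X * (Abs_fps (\<lambda>j. R_transform \<nu> $ Suc j) oo (fps_X * v))"
    using v0 by (auto simp: Abs_fps_nth_Suc)
  have "mult_model (($) (R_transform \<mu>)) (($) (R_transform \<nu>)) m \<alpha> \<beta> y v"
  proof (rule mult_model.intro)
    show "m = 1 + m * \<alpha> * \<beta>"
      using m_\<alpha>_\<beta> by simp
  qed (fact m0 y0 y_def v_def \<alpha> \<beta>_eq)+
  then show ?thesis
    unfolding m_def by (rule that)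
qed

lemma free_mult_conv_eqI:
  assumes \<mu>: "\<mu> \<in> Dist1x" and \<nu>: "\<nu> \<in> Dist1x" and \<rho>: "\<rho> \<in> Dist1x"
    and S: "S_transform \<rho> = S_transform \<mu> * S_transform \<nu>"
  shows "free_mult_conv \<mu> \<nu> = \<rho>"
proof -
  obtain \<alpha> \<beta> y v
    where model: "mult_model (($) (R_transform \<mu>)) (($) (R_transform \<nu>)) (moment_gf \<rho>) \<alpha> \<beta> y v"
    using S_transform_mult_model[OF assms] .
  have "free_state (mom \<mu>) (mom \<nu>) (concat (replicate n [(True, 1), (False, 1)])) = mom \<rho> n" for n
  proof -
    interpret mult_model "Suc (2 * n)" "($) (R_transform \<mu>)" "($) (R_transform \<nu>)" "moment_gf \<rho>" \<alpha> \<beta> y v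
      by (rule model)
    have "sum_list (map snd (concat (replicate n [(True, 1::nat), (False, 1)]))) = 2 * n"
      by (induction n) auto
    then have "free_state (mom \<mu>) (mom \<nu>) (concat (replicate n [(True, 1), (False, 1)]))
        = vacuum_state (concat (replicate n [(True, 1), (False, 1)]))"
      using \<mu> \<nu> Dist1x_subset_Dist by (intro free_state_eq_vacuum_state) auto
    also have "\<dots> = ((\<lambda>u. letter_op True (letter_op False u)) ^^ n) vacuum []"
      by (simp add: vacuum_state_def word_op_alternating[simplified])
    also have "\<dots> = word_series [] True $ n"
      by (rule alternating_power_vacuum) simp
    also have "\<dots> = mom \<rho> n"
      by (simp add: transfer_def)
    finally show ?thesis .
  qed
  then have "free_mult_conv \<mu> \<nu> = functional_of_moments (mom \<rho>)"
    by (simp only: free_mult_conv_def)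
  then show ?thesis
    using Dist_functional_of_moments \<rho> Dist1x_subset_Dist by auto
qed


section \<open>The map LOG\<close>

lemma zdlog_S_transform_in_R_transform_image:
  "zdlog (S_transform \<mu>) \<in> R_transform ` Dist"
  by (simp add: R_transform_image)

lemma
  shows LOG_in_Dist: "LOG \<mu> \<in> Dist"
    and R_transform_LOG: "R_transform (LOG \<mu>) = zdlog (S_transform \<mu>)"
  unfolding LOG_def
  by (rule the_inv_into_into[OF inj_on_R_transform zdlog_S_transform_in_R_transform_image subset_refl],
      rule f_the_inv_into_f[OF inj_on_R_transform zdlog_S_transform_in_R_transform_image])

lemma inj_on_LOG: "inj_on LOG Dist1x"
proof (rule inj_onI)
  fix \<mu> \<nu> assume \<mu>: "\<mu> \<in> Dist1x" and \<nu>: "\<nu> \<in> Dist1x" and eq: "LOG \<mu> = LOG \<nu>"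
  have "zdlog (S_transform \<mu>) = R_transform (LOG \<mu>)"
    by (rule R_transform_LOG[symmetric])
  also have "\<dots> = zdlog (S_transform \<nu>)"
    unfolding eq by (rule R_transform_LOG)
  finally have "S_transform \<mu> = S_transform \<nu>"
    by (rule zdlog_inj[rotated 2]) (simp_all add: \<mu> \<nu>)
  then show "\<mu> = \<nu>"
    using \<mu> \<nu> by (rule inj_onD[OF inj_on_S_transform])
qed

lemma LOG_image: "LOG ` Dist1x = Dist"
proof (intro equalityI subsetI)
  fix \<rho> assume "\<rho> \<in> LOG ` Dist1x"
  then show "\<rho> \<in> Dist"
    using LOG_in_Dist by auto
next
  fix \<rho> assume \<rho>: "\<rho> \<in> Dist"
  obtain f where f: "f $ 0 = 1" "zdlog f = R_transform \<rho>"
    using zdlog_surj[OF R_transform_nth_0[OF \<rho>]] by blast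
  have "f \<in> S_transform ` Dist1x"
    using f(1) by (simp add: S_transform_image)
  then obtain \<mu> where \<mu>: "\<mu> \<in> Dist1x" "S_transform \<mu> = f"
    by (metis imageE)
  have "R_transform (LOG \<mu>) = R_transform \<rho>"
    using R_transform_LOG[of \<mu>] \<mu>(2) f(2) by simp
  then have "LOG \<mu> = \<rho>"
    using inj_on_R_transform LOG_in_Dist \<rho> by (meson inj_onD)
  then show "\<rho> \<in> LOG ` Dist1x"
    using \<mu>(1) by blast
qed

lemma LOG_free_mult_conv:
  assumes \<mu>: "\<mu> \<in> Dist1x" and \<nu>: "\<nu> \<in> Dist1x"
  shows "LOG (free_mult_conv \<mu> \<nu>) = free_add_conv (LOG \<mu>) (LOG \<nu>)"
proof -
  have "(S_transform \<mu> * S_transform \<nu>) $ 0 = 1"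
    using \<mu> \<nu> by simp
  then have "S_transform \<mu> * S_transform \<nu> \<in> S_transform ` Dist1x"
    by (simp add: S_transform_image)
  then obtain \<rho> where \<rho>: "\<rho> \<in> Dist1x" and S: "S_transform \<rho> = S_transform \<mu> * S_transform \<nu>"
    by (metis imageE)
  have "R_transform (LOG \<rho>) = zdlog (S_transform \<mu>) + zdlog (S_transform \<nu>)"
    using R_transform_LOG[of \<rho>] S \<mu> \<nu> by (simp add: zdlog_mult)
  also have "\<dots> = R_transform (LOG \<mu>) + R_transform (LOG \<nu>)"
    by (simp add: R_transform_LOG)
  finally have "free_add_conv (LOG \<mu>) (LOG \<nu>) = LOG \<rho>"
    by (intro free_add_conv_eqI LOG_in_Dist)
  moreover have "free_mult_conv \<mu> \<nu> = \<rho>"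
    using \<mu> \<nu> \<rho> S by (rule free_mult_conv_eqI)
  ultimately show ?thesis
    by simp
qed

theorem mainTheorem2:
  shows "inj_on R_transform Dist
    \<and> (\<forall>\<mu> \<in> Dist1x. zdlog (S_transform \<mu>) \<in> R_transform ` Dist)
    \<and> bij_betw LOG Dist1x Dist
    \<and> (\<forall>\<mu> \<in> Dist1x. \<forall>\<nu> \<in> Dist1x. LOG (free_mult_conv \<mu> \<nu>) = free_add_conv (LOG \<mu>) (LOG \<nu>))"
  by (intro conjI ballI inj_on_R_transform zdlog_S_transform_in_R_transform_image
      bij_betw_imageI[OF inj_on_LOG LOG_image] LOG_free_mult_conv)

end
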